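(* For a root $\beta=t_i-t_j$ of $\mathrm{SL}_n(\mathbb C)$, $w_\beta$ is a maximal element (in the Bruhat order) of $\Omega_H=\{w_\gamma:\gamma\in\Delta_H\}$ if and only if $(i,j)$ is a corner of the modified Hessenberg stair shape.
   Context: Let $G=\mathrm{SL}_n(\mathbb C)$, $n\ge2$, $B$ upper triangular, $T$ diagonal, $W=S_n$ with Bruhat order; $t_i-t_j$ denotes the root $\mathrm{diag}(t_1,\dots,t_n)\mapsto t_it_j^{-1}$ with root space $\mathbb C E_{ij}$. A Hessenberg function is a weakly increasing $h:\{1,\dots,n\}\to\{1,\dots,n\}$ with $j\le h(j)$; its Hessenberg subspace is $H=\{(a_{ij})\in\mathfrak{sl}_n: a_{ij}=0\text{ for }i>h(j)\}$ and $\Delta_H$ is the set of roots $t_i-t_j$ with $E_{ij}\in H$. For a root $\beta=t_i-t_j$, $w_\beta\in S_n$ denotes the longest permutation with $w_\beta(i)=1$ and $w_\beta(j)=n$. With the convention $h(0):=0$, the modified Hessenberg function is $\overline h(j)=j-1$ if $h(j-1)=j-1$ and $h(j)=j$, and $\overline h(j)=h(j)$ otherwise; set $\overline h(0):=0$. A pair $(i,j)\in\{1,\dots,n\}^2$ is a corner of the modified Hessenberg stair shape if $i=\overline h(j)$ and $\overline h(j-1)<\overline h(j)$. *)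

theory Defs
  imports "HOL-Combinatorics.Combinatorics"
begin

definition perms :: "nat \<Rightarrow> (nat \<Rightarrow> nat) set" where
  "perms n = {w. w permutes {1..n}}"

text \<open>Coxeter length = number of inversions.\<close>
definition inv_len :: "nat \<Rightarrow> (nat \<Rightarrow> nat) \<Rightarrow> nat" where
  "inv_len n w = card {(a, b). a \<in> {1..n} \<and> b \<in> {1..n} \<and> a < b \<and> w b < w a}"

definition bruhat_step :: "nat \<Rightarrow> (nat \<Rightarrow> nat) \<Rightarrow> (nat \<Rightarrow> nat) \<Rightarrow> bool" where
  "bruhat_step n u v \<longleftrightarrow> u \<in> perms n \<and>
     (\<exists>a\<in>{1..n}. \<exists>b\<in>{1..n}. a \<noteq> b \<and> v = u \<circ> transpose a b)
     \<and> inv_len n u < inv_len n v"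

definition bruhat_le :: "nat \<Rightarrow> (nat \<Rightarrow> nat) \<Rightarrow> (nat \<Rightarrow> nat) \<Rightarrow> bool" where
  "bruhat_le n u v \<longleftrightarrow> u \<in> perms n \<and> v \<in> perms n \<and> (bruhat_step n)\<^sup>*\<^sup>* u v"

definition hessenberg :: "nat \<Rightarrow> (nat \<Rightarrow> nat) \<Rightarrow> bool" where
  "hessenberg n h \<longleftrightarrow> (\<forall>j\<in>{1..n}. j \<le> h j \<and> h j \<le> n) \<and>
     (\<forall>j\<in>{1..n}. \<forall>k\<in>{1..n}. j \<le> k \<longrightarrow> h j \<le> h k)"

text \<open>Roots t_i - t_j are encoded by pairs (i,j), i \<noteq> j.\<close>
definition roots :: "nat \<Rightarrow> (nat \<times> nat) set" where
  "roots n = {(i, j). i \<in> {1..n} \<and> j \<in> {1..n} \<and> i \<noteq> j}"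

text \<open>Delta_H: roots whose root space C E_ij lies in H, i.e. i \<le> h j.\<close>
definition Delta_H :: "nat \<Rightarrow> (nat \<Rightarrow> nat) \<Rightarrow> (nat \<times> nat) set" where
  "Delta_H n h = {(i, j). (i, j) \<in> roots n \<and> i \<le> h j}"

definition w_root :: "nat \<Rightarrow> nat \<times> nat \<Rightarrow> (nat \<Rightarrow> nat)" where
  "w_root n \<beta> = (THE w. w \<in> perms n \<and> w (fst \<beta>) = 1 \<and> w (snd \<beta>) = n \<and>
      (\<forall>v \<in> perms n. v (fst \<beta>) = 1 \<and> v (snd \<beta>) = n \<longrightarrow> inv_len n v \<le> inv_len n w))"

definition Omega_H :: "nat \<Rightarrow> (nat \<Rightarrow> nat) \<Rightarrow> (nat \<Rightarrow> nat) set" where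
  "Omega_H n h = w_root n ` Delta_H n h"

definition bruhat_maximal :: "nat \<Rightarrow> (nat \<Rightarrow> nat) set \<Rightarrow> (nat \<Rightarrow> nat) \<Rightarrow> bool" where
  "bruhat_maximal n S w \<longleftrightarrow> w \<in> S \<and> (\<forall>u\<in>S. bruhat_le n w u \<longrightarrow> u = w)"

definition h0 :: "(nat \<Rightarrow> nat) \<Rightarrow> nat \<Rightarrow> nat" where
  "h0 h j = (if j = 0 then 0 else h j)"

definition hbar :: "(nat \<Rightarrow> nat) \<Rightarrow> nat \<Rightarrow> nat" where
  "hbar h j = (if j = 0 then 0
               else if h0 h (j - 1) = j - 1 \<and> h j = j then j - 1 else h j)"

definition is_corner :: "nat \<Rightarrow> (nat \<Rightarrow> nat) \<Rightarrow> nat \<Rightarrow> nat \<Rightarrow> bool" where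
  "is_corner n h i j \<longleftrightarrow> i \<in> {1..n} \<and> j \<in> {1..n} \<and>
     i = hbar h j \<and> hbar h (j - 1) < hbar h j"

end

theory Submission
  imports Defs
begin

(* The permutation w_beta for beta = t_i - t_j sends i to 1, j to n and the other positions,
   in increasing order, onto n - 1, ..., 2; its inversions are exactly the pairs a < b with
   a \<noteq> i and b \<noteq> j. A length-increasing transposition can only move the value 1 to the right
   and the value n to the left, so w_(t_a - t_b) \<ge> w_(t_i - t_j) in the Bruhat order forces
   i \<le> a and b \<le> j, and at a corner (i, j) is the only root of Delta_H in this box. Away from a
   corner, one of five explicit transpositions moves (i, j) to a neighbouring root of Delta_H and
   increases the length. *)

definition inversions :: "nat \<Rightarrow> (nat \<Rightarrow> nat) \<Rightarrow> (nat \<times> nat) set" where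
  "inversions n w = {(a, b). a \<in> {1..n} \<and> b \<in> {1..n} \<and> a < b \<and> w b < w a}"

lemma inv_len_eq_card_inversions: "inv_len n w = card (inversions n w)"
  by (simp add: inv_len_def inversions_def)

lemma finite_inversions: "finite (inversions n w)"
  by (rule finite_subset[of _ "{1..n} \<times> {1..n}"]) (auto simp: inversions_def)

lemma inv_len_comp_transpose_less:
  assumes "p < q" "p \<in> {1..n}" "q \<in> {1..n}" "w q < w p"
  shows "inv_len n (w \<circ> transpose p q) < inv_len n w"
proof -
  define \<tau> where "\<tau> = transpose p q"
  have \<tau>\<tau>: "\<tau> (\<tau> x) = x" for x by (simp add: \<tau>_def)
  have \<tau>_eq_iff: "\<tau> x = \<tau> y \<longleftrightarrow> x = y" for x y by (metis \<tau>\<tau>)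
  define \<phi> where "\<phi> = (\<lambda>(a, b). if \<tau> a < \<tau> b then (\<tau> a, \<tau> b) else (a, b))"
  have "inj_on \<phi> (inversions n (w \<circ> \<tau>))"
    by (rule inj_onI) (auto simp: \<phi>_def inversions_def \<tau>\<tau> \<tau>_eq_iff split: if_splits)
  moreover have "\<phi> ` inversions n (w \<circ> \<tau>) \<subseteq> inversions n w - {(p, q)}"
  proof
    fix z assume "z \<in> \<phi> ` inversions n (w \<circ> \<tau>)"
    then obtain a b where z: "z = \<phi> (a, b)" and ab: "a \<in> {1..n}" "b \<in> {1..n}" "a < b"
      "w (\<tau> b) < w (\<tau> a)" by (auto simp: inversions_def)
    show "z \<in> inversions n w - {(p, q)}"
      using z ab assms by (auto simp: \<phi>_def \<tau>_def inversions_def transpose_def split: if_splits)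
  qed
  ultimately have "card (inversions n (w \<circ> \<tau>)) \<le> card (inversions n w - {(p, q)})"
    by (intro card_inj_on_le) (auto simp: finite_inversions)
  also have "\<dots> < card (inversions n w)"
    using assms by (intro card_Diff1_less finite_inversions) (auto simp: inversions_def)
  finally show ?thesis by (simp add: inv_len_eq_card_inversions \<tau>_def)
qed

lemma permutes_eq_card_le:
  fixes w :: "nat \<Rightarrow> nat"
  assumes "w permutes {1..n}" "a \<in> {1..n}"
  shows "w a = card {b \<in> {1..n}. w b \<le> w a}"
proof -
  have im: "w ` {1..n} = {1..n}" using permutes_image[OF assms(1)] .
  have "w ` {b \<in> {1..n}. w b \<le> w a} = {1..w a}"
  proof (intro equalityI subsetI)
    fix y assume "y \<in> {1..w a}"
    moreover have "w a \<le> n" using im assms(2) by auto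
    ultimately obtain b where "b \<in> {1..n}" "y = w b"
      using im by (metis atLeastAtMost_iff imageE order_trans)
    then show "y \<in> w ` {b \<in> {1..n}. w b \<le> w a}" using \<open>y \<in> {1..w a}\<close> by auto
  qed (use im in auto)
  moreover have "inj_on w {b \<in> {1..n}. w b \<le> w a}"
    using permutes_inj_on[OF assms(1)] by (rule inj_on_subset) auto
  ultimately show ?thesis
    using card_image by fastforce
qed

lemma permutes_eqI_by_order:
  fixes u v :: "nat \<Rightarrow> nat"
  assumes "u permutes {1..n}" "v permutes {1..n}"
    and "\<And>a b. a \<in> {1..n} \<Longrightarrow> b \<in> {1..n} \<Longrightarrow> u b < u a \<longleftrightarrow> v b < v a"
  shows "u = v"
proof
  fix x show "u x = v x"
  proof (cases "x \<in> {1..n}")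
    case True
    have "u b \<le> u x \<longleftrightarrow> v b \<le> v x" if "b \<in> {1..n}" for b
      using assms(3)[OF that True] by (simp add: not_less[symmetric])
    then have "{b \<in> {1..n}. u b \<le> u x} = {b \<in> {1..n}. v b \<le> v x}"
      by auto
    then show ?thesis
      using permutes_eq_card_le[OF assms(1) True] permutes_eq_card_le[OF assms(2) True] by simp
  next
    case False
    then show ?thesis using assms(1,2) by (simp add: permutes_not_in)
  qed
qed

lemma permutes_eqI_by_inversions:
  assumes "u permutes {1..n}" "v permutes {1..n}" "inversions n u = inversions n v"
  shows "u = v"
proof (rule permutes_eqI_by_order[OF assms(1,2)])
  fix a b assume ab: "a \<in> {1..n}" "b \<in> {1..n}"
  have less_iff: "w b < w a \<longleftrightarrow> \<not> w a < w b" if "w permutes {1..n}" "a \<noteq> b" for w :: "nat \<Rightarrow> nat"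
    using permutes_inj[OF that(1)] that(2) by (metis injD not_less_iff_gr_or_eq)
  show "u b < u a \<longleftrightarrow> v b < v a"
  proof (cases a b rule: linorder_cases)
    case less
    have "(a, b) \<in> inversions n u \<longleftrightarrow> (a, b) \<in> inversions n v" using assms(3) by simp
    then show ?thesis using ab less by (simp add: inversions_def)
  next
    case greater
    have "(b, a) \<in> inversions n u \<longleftrightarrow> (b, a) \<in> inversions n v" using assms(3) by simp
    then have "u a < u b \<longleftrightarrow> v a < v b" using ab greater by (simp add: inversions_def)
    then show ?thesis using less_iff[OF assms(1)] less_iff[OF assms(2)] greater by simp
  qed simp
qed

definition w_max :: "nat \<Rightarrow> nat \<Rightarrow> nat \<Rightarrow> nat \<Rightarrow> nat" where
  "w_max n i j k = (if k \<notin> {1..n} then k else if k = i then 1 else if k = j then n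
     else n - 1 - card {m \<in> {1..n} - {i, j}. m < k})"

definition placed_above :: "nat \<Rightarrow> nat \<Rightarrow> nat \<Rightarrow> nat \<Rightarrow> bool" where
  "placed_above i j a b \<longleftrightarrow> a \<noteq> b \<and> a \<noteq> i \<and> b \<noteq> j \<and> (a = j \<or> b = i \<or> a < b)"

lemma card_less_than_strict_mono:
  assumes "k < k'" "k \<in> A" "finite A"
  shows "card {m \<in> A. m < k} < card {m \<in> A. m < (k' :: nat)}"
  using assms by (intro psubset_card_mono) auto

lemma card_less_than_bound:
  assumes "k \<in> {1..n}" "k \<notin> {i, j}" "i \<in> {1..n}" "j \<in> {1..n}" "i \<noteq> j"
  shows "card {m \<in> {1..n} - {i, j}. m < k} + 3 \<le> n"
proof -
  have "card {m \<in> {1..n} - {i, j}. m < k} \<le> card ({1..n} - {i, j, k})"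
    by (intro card_mono) auto
  also have "\<dots> = n - 3"
    using assms by (subst card_Diff_subset) auto
  finally show ?thesis
    using card_mono[of "{1..n}" "{i, j, k}"] assms by auto
qed

lemma w_max_simps:
  assumes "(i, j) \<in> roots n"
  shows "w_max n i j i = 1" "w_max n i j j = n" "k \<notin> {1..n} \<Longrightarrow> w_max n i j k = k"
  using assms by (auto simp: w_max_def roots_def)

lemma w_max_middle:
  assumes "(i, j) \<in> roots n" "k \<in> {1..n}" "k \<notin> {i, j}"
  shows "2 \<le> w_max n i j k" "w_max n i j k < n"
  using card_less_than_bound[of k n i j] assms by (auto simp: w_max_def roots_def)

lemma w_max_in_range:
  assumes "(i, j) \<in> roots n" "k \<in> {1..n}"
  shows "w_max n i j k \<in> {1..n}" "w_max n i j k = 1 \<longleftrightarrow> k = i" "w_max n i j k = n \<longleftrightarrow> k = j"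
  using assms w_max_simps[OF assms(1)] w_max_middle[OF assms(1,2)]
  by (cases "k \<in> {i, j}"; force simp: roots_def)+

lemma w_max_less_iff:
  assumes "(i, j) \<in> roots n" "a \<in> {1..n}" "b \<in> {1..n}"
  shows "w_max n i j b < w_max n i j a \<longleftrightarrow> placed_above i j a b"
proof (cases "{a, b} \<inter> {i, j} = {}")
  case True
  define c where "c k = card {m \<in> {1..n} - {i, j}. m < k}" for k
  have "w_max n i j a = n - 1 - c a" "w_max n i j b = n - 1 - c b"
    using True assms by (auto simp: w_max_def c_def)
  moreover have "a < b \<Longrightarrow> c a < c b" "b < a \<Longrightarrow> c b < c a"
    using True assms card_less_than_strict_mono[of a b "{1..n} - {i, j}"]
      card_less_than_strict_mono[of b a "{1..n} - {i, j}"]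
    by (auto simp: c_def)
  moreover have "c a + 3 \<le> n" "c b + 3 \<le> n"
    using True assms card_less_than_bound[of a n i j] card_less_than_bound[of b n i j]
    by (auto simp: roots_def c_def)
  ultimately have "w_max n i j b < w_max n i j a \<longleftrightarrow> a < b"
    by (cases a b rule: linorder_cases) auto
  then show ?thesis
    using True by (auto simp: placed_above_def)
next
  case False
  have "i \<noteq> j" using assms(1) by (simp add: roots_def)
  then show ?thesis
    using False w_max_in_range[OF assms(1,2)] w_max_in_range[OF assms(1,3)]
    unfolding placed_above_def by (cases "a = i"; cases "b = j"; auto)
qed

lemma w_max_permutes:
  assumes "(i, j) \<in> roots n"
  shows "w_max n i j permutes {1..n}"
proof (rule bij_imp_permutes)
  have "inj_on (w_max n i j) {1..n}"
  proof (rule inj_onI)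
    fix a b assume "a \<in> {1..n}" "b \<in> {1..n}" "w_max n i j a = w_max n i j b"
    then have "\<not> placed_above i j a b" "\<not> placed_above i j b a"
      using w_max_less_iff[OF assms] by (metis less_irrefl)+
    then show "a = b" using assms by (auto simp: placed_above_def roots_def)
  qed
  moreover have "w_max n i j ` {1..n} \<subseteq> {1..n}"
    using w_max_in_range(1)[OF assms] by blast
  ultimately show "bij_betw (w_max n i j) {1..n} {1..n}"
    by (simp add: bij_betw_def endo_inj_surj)
  show "x \<notin> {1..n} \<Longrightarrow> w_max n i j x = x" for x
    using w_max_simps(3)[OF assms] .
qed

lemma w_max_inj:
  assumes "(i, j) \<in> roots n" "(a, b) \<in> roots n" "w_max n a b = w_max n i j"
  shows "(a, b) = (i, j)"
proof -
  have "a \<in> {1..n}" "b \<in> {1..n}" using assms(2) by (auto simp: roots_def)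
  moreover have "w_max n i j a = 1" "w_max n i j b = n"
    using w_max_simps(1,2)[OF assms(2)] assms(3) by auto
  ultimately show ?thesis using w_max_in_range(2,3)[OF assms(1)] by simp
qed

lemma inversions_w_max:
  assumes "(i, j) \<in> roots n"
  shows "inversions n (w_max n i j) = {(a, b). a \<in> {1..n} \<and> b \<in> {1..n} \<and> a < b \<and> a \<noteq> i \<and> b \<noteq> j}"
  using w_max_less_iff[OF assms] by (auto simp: inversions_def placed_above_def)

lemma inversions_subset_w_max:
  assumes "(i, j) \<in> roots n" "v permutes {1..n}" "v i = 1" "v j = n"
  shows "inversions n v \<subseteq> inversions n (w_max n i j)"
proof -
  have "1 \<le> v a \<and> v a \<le> n" if "a \<in> {1..n}" for a
    using that permutes_in_image[OF assms(2)] by auto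
  then show ?thesis
    unfolding inversions_w_max[OF assms(1)] using assms(3,4)
    by (fastforce simp: inversions_def)
qed

lemma w_root_eq_w_max:
  assumes "(i, j) \<in> roots n"
  shows "w_root n (i, j) = w_max n i j"
  unfolding w_root_def fst_conv snd_conv
proof (rule the_equality)
  have "inv_len n v \<le> inv_len n (w_max n i j)" if "v \<in> perms n" "v i = 1" "v j = n" for v
    using inversions_subset_w_max[OF assms] that
    by (simp add: inv_len_eq_card_inversions perms_def card_mono finite_inversions)
  then show "w_max n i j \<in> perms n \<and> w_max n i j i = 1 \<and> w_max n i j j = n \<and>
      (\<forall>v\<in>perms n. v i = 1 \<and> v j = n \<longrightarrow> inv_len n v \<le> inv_len n (w_max n i j))"
    using w_max_permutes[OF assms] w_max_simps[OF assms] by (simp add: perms_def)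
next
  fix w assume w: "w \<in> perms n \<and> w i = 1 \<and> w j = n \<and>
    (\<forall>v\<in>perms n. v i = 1 \<and> v j = n \<longrightarrow> inv_len n v \<le> inv_len n w)"
  then have sub: "inversions n w \<subseteq> inversions n (w_max n i j)"
    using inversions_subset_w_max[OF assms] by (simp add: perms_def)
  moreover have "card (inversions n (w_max n i j)) \<le> card (inversions n w)"
    using w w_max_permutes[OF assms] w_max_simps[OF assms]
    by (simp add: perms_def inv_len_eq_card_inversions)
  ultimately have "inversions n w = inversions n (w_max n i j)"
    by (metis card_subset_eq finite_inversions card_mono antisym)
  then show "w = w_max n i j"
    using w w_max_permutes[OF assms] by (intro permutes_eqI_by_inversions) (simp_all add: perms_def)
qed

lemma bruhat_step_imp_le:
  assumes "bruhat_step n u v"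
  shows "bruhat_le n u v"
proof -
  obtain a b where ab: "a \<in> {1..n}" "b \<in> {1..n}" and v: "v = u \<circ> transpose a b"
    and u: "u permutes {1..n}"
    using assms by (auto simp: bruhat_step_def perms_def)
  have "v permutes {1..n}" unfolding v using permutes_compose[OF permutes_swap_id[OF ab] u] .
  then show ?thesis using assms u by (simp add: bruhat_le_def perms_def)
qed

lemma bruhat_step_moves_extremes:
  assumes "bruhat_step n w v" "w y = c" "v z = c" "c = 1 \<or> c = n"
  shows "(c = 1 \<longrightarrow> y \<le> z) \<and> (c = n \<longrightarrow> z \<le> y)"
proof -
  obtain a b where ab: "a \<in> {1..n}" "b \<in> {1..n}" "a \<noteq> b" "v = w \<circ> transpose a b"
    and w: "w permutes {1..n}" and longer: "inv_len n w < inv_len n v"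
    using assms(1) by (auto simp: bruhat_step_def perms_def)
  have "w (transpose a b z) = w y" using assms(2,3) ab(4) by simp
  then have z: "z = transpose a b y"
    using permutes_inj[OF w] by (metis injD transpose_involutory)
  have "w a \<in> {1..n}" "w b \<in> {1..n}" "w a \<noteq> w b"
    using ab permutes_in_image[OF w] permutes_inj[OF w] by (auto dest: injD)
  moreover have "\<not> (a < b \<and> w b < w a)" "\<not> (b < a \<and> w a < w b)"
    using inv_len_comp_transpose_less[of a b n w] inv_len_comp_transpose_less[of b a n w] ab longer
    by (auto simp: transpose_commute)
  ultimately show ?thesis
    using z ab(3) assms(2,4) by (cases a b rule: linorder_cases) (auto simp: transpose_def)
qed

lemma bruhat_le_moves_extremes:
  assumes "bruhat_le n u v" "u y = c" "v z = c" "c = 1 \<or> c = n"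
  shows "(c = 1 \<longrightarrow> y \<le> z) \<and> (c = n \<longrightarrow> z \<le> y)"
proof -
  have u: "u permutes {1..n}" using assms(1) by (simp add: bruhat_le_def perms_def)
  have "(bruhat_step n)\<^sup>*\<^sup>* u v" using assms(1) by (simp add: bruhat_le_def)
  then show ?thesis
    using assms(3)
  proof (induction arbitrary: z rule: rtranclp_induct)
    case base
    then have "z = y" using assms(2) permutes_inj[OF u] by (metis injD)
    then show ?case by simp
  next
    case (step w v)
    obtain a b where "v = w \<circ> transpose a b" using step.hyps(2) by (auto simp: bruhat_step_def)
    then have "w (transpose a b z) = c" using step.prems by simp
    then show ?case
      using step.IH bruhat_step_moves_extremes[OF step.hyps(2) _ step.prems] assms(4) by fastforce
  qed
qed

lemma bruhat_le_w_maxD: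
  assumes "(i, j) \<in> roots n" "(a, b) \<in> roots n" "bruhat_le n (w_max n i j) (w_max n a b)"
  shows "i \<le> a \<and> b \<le> j"
  using bruhat_le_moves_extremes[OF assms(3), of i 1 a] bruhat_le_moves_extremes[OF assms(3), of j n b]
    w_max_simps[OF assms(1)] w_max_simps[OF assms(2)] by simp

lemma bruhat_step_w_max:
  assumes r: "(i, j) \<in> roots n" "(i', j') \<in> roots n"
    and ab: "a < b" "a \<in> {1..n}" "b \<in> {1..n}"
    and order: "\<And>x y. x \<in> {1..n} \<Longrightarrow> y \<in> {1..n} \<Longrightarrow>
       placed_above i j (transpose a b x) (transpose a b y) \<longleftrightarrow> placed_above i' j' x y"
    and above: "placed_above i' j' a b"
  shows "bruhat_step n (w_max n i j) (w_max n i' j')"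
proof -
  have P: "w_max n i j permutes {1..n}" "w_max n i' j' permutes {1..n}"
    using w_max_permutes r by auto
  have eq: "w_max n i' j' = w_max n i j \<circ> transpose a b"
  proof (rule permutes_eqI_by_order[OF P(2)])
    show "w_max n i j \<circ> transpose a b permutes {1..n}"
      using permutes_compose[OF permutes_swap_id[OF ab(2,3)] P(1)] .
    fix x y assume xy: "x \<in> {1..n}" "y \<in> {1..n}"
    then have "transpose a b x \<in> {1..n}" "transpose a b y \<in> {1..n}"
      using ab by (auto simp: transpose_def)
    then show "w_max n i' j' y < w_max n i' j' x \<longleftrightarrow>
        (w_max n i j \<circ> transpose a b) y < (w_max n i j \<circ> transpose a b) x"
      using w_max_less_iff[OF r(2) xy] w_max_less_iff[OF r(1)] order[OF xy] by simp
  qed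
  have "inv_len n (w_max n i' j' \<circ> transpose a b) < inv_len n (w_max n i' j')"
    using inv_len_comp_transpose_less[OF ab] w_max_less_iff[OF r(2) ab(2,3)] above by blast
  moreover have "w_max n i' j' \<circ> transpose a b = w_max n i j"
    unfolding eq by (simp add: comp_assoc)
  moreover have "\<exists>a'\<in>{1..n}. \<exists>b'\<in>{1..n}. a' \<noteq> b' \<and> w_max n i' j' = w_max n i j \<circ> transpose a' b'"
    using ab eq by (intro bexI[of _ a] bexI[of _ b]) auto
  ultimately show ?thesis
    using P(1) unfolding bruhat_step_def perms_def by simp
qed

lemma bruhat_step_w_max_down:
  assumes "(i, j) \<in> roots n" "i + 1 \<noteq> j" "i + 1 \<le> n"
  shows "bruhat_step n (w_max n i j) (w_max n (i + 1) j)"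
  by (rule bruhat_step_w_max[where a = i and b = "i + 1"])
    (use assms in \<open>auto simp: roots_def placed_above_def transpose_def\<close>)

lemma bruhat_step_w_max_down_past_diagonal:
  assumes "(i, i + 1) \<in> roots n" "i + 2 \<le> n"
  shows "bruhat_step n (w_max n i (i + 1)) (w_max n (i + 2) (i + 1))"
  by (rule bruhat_step_w_max[where a = i and b = "i + 2"])
    (use assms in \<open>auto simp: roots_def placed_above_def transpose_def\<close>)

lemma bruhat_step_w_max_left:
  assumes "(i, j) \<in> roots n" "j \<ge> 2" "j - 1 \<noteq> i"
  shows "bruhat_step n (w_max n i j) (w_max n i (j - 1))"
  by (rule bruhat_step_w_max[where a = "j - 1" and b = j])
    (use assms in \<open>auto simp: roots_def placed_above_def transpose_def\<close>)

lemma bruhat_step_w_max_left_past_diagonal: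
  assumes "(i, i + 1) \<in> roots n" "i \<ge> 2"
  shows "bruhat_step n (w_max n i (i + 1)) (w_max n i (i - 1))"
  by (rule bruhat_step_w_max[where a = "i - 1" and b = "i + 1"])
    (use assms in \<open>auto simp: roots_def placed_above_def transpose_def\<close>)

lemma bruhat_step_w_max_reflect:
  assumes "(i, i + 1) \<in> roots n"
  shows "bruhat_step n (w_max n i (i + 1)) (w_max n (i + 1) i)"
  by (rule bruhat_step_w_max[where a = i and b = "i + 1"])
    (use assms in \<open>auto simp: roots_def placed_above_def transpose_def\<close>)

lemma hessenbergD:
  assumes "hessenberg n h" "k \<in> {1..n}"
  shows "k \<le> h k" "h k \<le> n"
  using assms by (auto simp: hessenberg_def)

lemma hessenberg_mono:
  assumes "hessenberg n h" "k \<in> {1..n}" "l \<in> {1..n}" "k \<le> l"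
  shows "h k \<le> h l"
  using assms by (auto simp: hessenberg_def)

lemma hbar_eq:
  "j \<ge> 1 \<Longrightarrow> hbar h j = (if h0 h (j - 1) = j - 1 \<and> h j = j then j - 1 else h j)"
  by (simp add: hbar_def)

lemma h0_eq: "k \<ge> 1 \<Longrightarrow> h0 h k = h k"
  by (simp add: h0_def)

lemma le_hbar_if_mem_Delta_H:
  assumes "(i, j) \<in> Delta_H n h"
  shows "i \<le> hbar h j"
  using assms by (auto simp: Delta_H_def roots_def hbar_eq)

lemma hbar_le:
  assumes "hessenberg n h" "j \<in> {1..n}"
  shows "hbar h j \<le> h j"
  using hessenbergD[OF assms] assms(2) by (simp add: hbar_eq)

lemma corner_unique_in_box:
  assumes hs: "hessenberg n h" and c: "is_corner n h i j" and "(i, j) \<in> roots n"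
    and ab: "(a, b) \<in> Delta_H n h" "i \<le> a" "b \<le> j"
  shows "(a, b) = (i, j)"
proof -
  have ij: "i \<in> {1..n}" "j \<in> {1..n}" "i \<noteq> j" "i = hbar h j" "hbar h (j - 1) < hbar h j"
    using c assms(3) by (auto simp: is_corner_def roots_def)
  have abn: "a \<in> {1..n}" "b \<in> {1..n}" "a \<noteq> b" "a \<le> h b"
    using ab by (auto simp: Delta_H_def roots_def)
  have hb: "h b \<le> h j" using hessenberg_mono[OF hs abn(2) ij(2) ab(3)] .
  show ?thesis
  proof (cases "h0 h (j - 1) = j - 1 \<and> h j = j")
    case diag: True
    then have i: "i = j - 1" and j2: "j \<ge> 2" using ij hbar_eq[of j h] by auto
    then have hj1: "h (j - 1) = j - 1" using diag h0_eq[of "j - 1" h] by auto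
    have j1: "j - 1 \<in> {1..n}" using ij j2 by auto
    have "a \<noteq> j"
    proof
      assume "a = j"
      then have "b \<le> j - 1" using abn ab by auto
      then show False using hessenberg_mono[OF hs abn(2) j1] hj1 \<open>a = j\<close> abn by auto
    qed
    then have a: "a = j - 1" using hb diag abn ab i by auto
    have "b = j"
    proof (rule ccontr)
      assume "b \<noteq> j"
      then have "b \<le> j - 2" using abn a ab by auto
      moreover have j2': "j - 2 \<in> {1..n}" using calculation abn ij by auto
      ultimately have "h (j - 2) \<ge> j - 1" "j - 2 \<ge> 1"
        using hessenberg_mono[OF hs abn(2) j2'] a abn by auto
      then have "hbar h (j - 1) = h (j - 1)"
        using h0_eq[of "j - 2" h] hbar_eq[of "j - 1" h] j2 by (auto simp: numeral_2_eq_2)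
      then show False using ij hj1 i by auto
    qed
    then show ?thesis using a i by simp
  next
    case not_diag: False
    then have i: "i = h j" using ij hbar_eq[of j h] by auto
    then have a: "a = i" "h b = h j" using hb abn ab by auto
    have "b = j"
    proof (rule ccontr)
      assume "b \<noteq> j"
      then have "b \<le> j - 1" "j \<ge> 2" using ab abn by auto
      moreover have j1: "j - 1 \<in> {1..n}" using calculation ij by auto
      ultimately have "h (j - 1) = h j"
        using hessenberg_mono[OF hs abn(2) j1] hessenberg_mono[OF hs j1 ij(2)] a by auto
      moreover have "h j \<ge> j" using hessenbergD[OF hs ij(2)] by simp
      ultimately have "hbar h (j - 1) = h (j - 1)"
        using hbar_eq[of "j - 1" h] \<open>j \<ge> 2\<close> by auto
      then show False using ij \<open>h (j - 1) = h j\<close> i by auto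
    qed
    then show ?thesis using a by simp
  qed
qed

lemma bruhat_step_in_Delta_H_below_hbar:
  assumes hs: "hessenberg n h" and r: "(i, j) \<in> roots n" and below: "i < hbar h j"
  shows "\<exists>a b. (a, b) \<in> Delta_H n h \<and> bruhat_step n (w_max n i j) (w_max n a b)"
proof -
  have ij: "i \<in> {1..n}" "j \<in> {1..n}" "i \<noteq> j" using r by (auto simp: roots_def)
  have hj: "j \<le> h j" "h j \<le> n" "hbar h j \<le> h j"
    using hessenbergD[OF hs ij(2)] hbar_le[OF hs ij(2)] by auto
  show ?thesis
  proof (cases "i + 1 = j")
    case False
    then have "(i + 1, j) \<in> Delta_H n h"
      using below hj ij by (auto simp: Delta_H_def roots_def)
    moreover have "bruhat_step n (w_max n i j) (w_max n (i + 1) j)"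
      using bruhat_step_w_max_down[OF r False] below hj by auto
    ultimately show ?thesis by blast
  next
    case True
    then have not_diag: "\<not> (h0 h i = i \<and> h j = j)"
      using below hbar_eq[of j h] ij by auto
    have r': "(i, i + 1) \<in> roots n" using r True by simp
    show ?thesis
    proof (cases "h j = j")
      case False
      then have "(i + 2, i + 1) \<in> Delta_H n h"
        using True hj ij by (auto simp: Delta_H_def roots_def)
      moreover have "bruhat_step n (w_max n i j) (w_max n (i + 2) (i + 1))"
        using bruhat_step_w_max_down_past_diagonal[OF r'] True False hj by auto
      ultimately show ?thesis by blast
    next
      case diag: True
      have "i \<le> h i" "h i \<le> h j" "h i \<noteq> i"
        using hessenbergD[OF hs ij(1)] hessenberg_mono[OF hs ij(1,2)] not_diag diag h0_eq[of i h] True ij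
        by auto
      then have "h i = i + 1" using diag True by auto
      then have "(i + 1, i) \<in> Delta_H n h" using True ij by (auto simp: Delta_H_def roots_def)
      moreover have "bruhat_step n (w_max n i j) (w_max n (i + 1) i)"
        using bruhat_step_w_max_reflect[OF r'] True by simp
      ultimately show ?thesis by blast
    qed
  qed
qed

lemma bruhat_step_in_Delta_H_at_hbar:
  assumes hs: "hessenberg n h" and r: "(i, j) \<in> roots n"
    and at: "i = hbar h j" and not_rising: "hbar h j \<le> hbar h (j - 1)"
  shows "\<exists>a b. (a, b) \<in> Delta_H n h \<and> bruhat_step n (w_max n i j) (w_max n a b)"
proof -
  have ij: "i \<in> {1..n}" "j \<in> {1..n}" "i \<noteq> j" using r by (auto simp: roots_def)
  have j2: "j \<ge> 2"
    using at not_rising ij by (cases "j = 1") (auto simp: hbar_def)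
  have j1: "j - 1 \<in> {1..n}" using ij j2 by auto
  have hbar_prev: "hbar h (j - 1) = (if h0 h (j - 2) = j - 2 \<and> h (j - 1) = j - 1 then j - 2 else h (j - 1))"
    using hbar_eq[of "j - 1" h] j2 by (simp add: numeral_2_eq_2)
  show ?thesis
  proof (cases "h0 h (j - 1) = j - 1 \<and> h j = j")
    case False
    then have i: "i = h j" using at hbar_eq[of j h] ij by auto
    have "j \<le> h j" "h (j - 1) \<le> h j"
      using hessenbergD[OF hs ij(2)] hessenberg_mono[OF hs j1 ij(2)] by auto
    then have "hbar h (j - 1) = h (j - 1)" "h (j - 1) = h j"
      using not_rising at i hbar_prev j2 by (auto split: if_splits)
    then have "(i, j - 1) \<in> Delta_H n h" "j - 1 \<noteq> i"
      using i ij j1 \<open>j \<le> h j\<close> by (auto simp: Delta_H_def roots_def)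
    moreover have "bruhat_step n (w_max n i j) (w_max n i (j - 1))"
      using bruhat_step_w_max_left[OF r j2] calculation by simp
    ultimately show ?thesis by blast
  next
    case diag: True
    then have i: "i = j - 1" and hj1: "h (j - 1) = j - 1"
      using at hbar_eq[of j h] ij h0_eq[of "j - 1" h] j2 by auto
    then have "h0 h (j - 2) \<noteq> j - 2" using not_rising at hbar_prev j2 by auto
    then have j3: "j - 2 \<in> {1..n}" and "h (j - 2) \<noteq> j - 2"
      using ij h0_eq[of "j - 2" h] by (auto simp: h0_def split: if_splits)
    moreover have "j - 2 \<le> h (j - 2)" "h (j - 2) \<le> h (j - 1)"
      using hessenbergD[OF hs j3] hessenberg_mono[OF hs j3 j1] by auto
    ultimately have "h (j - 2) = i" using hj1 i by linarith
    then have "(i, i - 1) \<in> Delta_H n h"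
      using i ij j3 by (auto simp: Delta_H_def roots_def numeral_2_eq_2)
    moreover have "bruhat_step n (w_max n i j) (w_max n i (i - 1))"
      using bruhat_step_w_max_left_past_diagonal[of i n] r i j3 j2 by auto
    ultimately show ?thesis by blast
  qed
qed

lemma bruhat_step_in_Delta_H_if_not_corner:
  assumes hs: "hessenberg n h" and D: "(i, j) \<in> Delta_H n h" and not_corner: "\<not> is_corner n h i j"
  shows "\<exists>a b. (a, b) \<in> Delta_H n h \<and> bruhat_step n (w_max n i j) (w_max n a b)"
proof -
  have r: "(i, j) \<in> roots n" using D by (simp add: Delta_H_def)
  then have "i < hbar h j \<or> (i = hbar h j \<and> hbar h j \<le> hbar h (j - 1))"
    using le_hbar_if_mem_Delta_H[OF D] not_corner by (auto simp: is_corner_def roots_def)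
  then show ?thesis
    using bruhat_step_in_Delta_H_below_hbar[OF hs r] bruhat_step_in_Delta_H_at_hbar[OF hs r] by blast
qed

lemma Omega_H_eq: "Omega_H n h = (\<lambda>(a, b). w_max n a b) ` Delta_H n h"
  unfolding Omega_H_def by (rule image_cong) (auto simp: Delta_H_def w_root_eq_w_max)

lemma w_max_mem_Omega_H_iff:
  assumes "(i, j) \<in> roots n"
  shows "w_max n i j \<in> Omega_H n h \<longleftrightarrow> (i, j) \<in> Delta_H n h"
proof
  assume "w_max n i j \<in> Omega_H n h"
  then obtain a b where "(a, b) \<in> Delta_H n h" "w_max n i j = w_max n a b"
    by (auto simp: Omega_H_eq)
  then show "(i, j) \<in> Delta_H n h"
    using w_max_inj[OF assms, of a b] by (simp add: Delta_H_def)
next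
  assume "(i, j) \<in> Delta_H n h"
  then show "w_max n i j \<in> Omega_H n h"
    unfolding Omega_H_eq by (rule rev_image_eqI) simp
qed

lemma corner_mem_Delta_H:
  assumes "hessenberg n h" "is_corner n h i j" "(i, j) \<in> roots n"
  shows "(i, j) \<in> Delta_H n h"
  using hbar_le[OF assms(1)] assms(2,3) by (fastforce simp: is_corner_def Delta_H_def)

lemma is_corner_if_bruhat_maximal:
  assumes hs: "hessenberg n h" and r: "(i, j) \<in> roots n"
    and max: "bruhat_maximal n (Omega_H n h) (w_max n i j)"
  shows "is_corner n h i j"
proof (rule ccontr)
  have D: "(i, j) \<in> Delta_H n h"
    using max w_max_mem_Omega_H_iff[OF r] by (simp add: bruhat_maximal_def)
  assume "\<not> is_corner n h i j"
  then obtain a b where ab: "(a, b) \<in> Delta_H n h" "bruhat_step n (w_max n i j) (w_max n a b)"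
    using bruhat_step_in_Delta_H_if_not_corner[OF hs D] by blast
  have "w_max n a b \<in> Omega_H n h"
    using ab(1) w_max_mem_Omega_H_iff[of a b n h] by (simp add: Delta_H_def)
  then have "w_max n a b = w_max n i j"
    using max bruhat_step_imp_le[OF ab(2)] by (simp add: bruhat_maximal_def)
  then show False using ab(2) by (simp add: bruhat_step_def)
qed

lemma bruhat_maximal_if_is_corner:
  assumes hs: "hessenberg n h" and r: "(i, j) \<in> roots n" and c: "is_corner n h i j"
  shows "bruhat_maximal n (Omega_H n h) (w_max n i j)"
  unfolding bruhat_maximal_def
proof (intro conjI ballI impI)
  show "w_max n i j \<in> Omega_H n h"
    using w_max_mem_Omega_H_iff[OF r] corner_mem_Delta_H[OF hs c r] by simp
  fix u assume "u \<in> Omega_H n h" "bruhat_le n (w_max n i j) u"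
  then obtain a b where ab: "(a, b) \<in> Delta_H n h" "u = w_max n a b"
    and "bruhat_le n (w_max n i j) (w_max n a b)" by (auto simp: Omega_H_eq)
  then have "i \<le> a" "b \<le> j"
    using bruhat_le_w_maxD[OF r] by (auto simp: Delta_H_def)
  then show "u = w_max n i j"
    using corner_unique_in_box[OF hs c r ab(1)] ab(2) by simp
qed

theorem mainTheorem14:
  fixes n :: nat and h :: "nat \<Rightarrow> nat" and i j :: nat
  assumes "n \<ge> 2"
    and "hessenberg n h"
    and "(i, j) \<in> roots n"
  shows "bruhat_maximal n (Omega_H n h) (w_root n (i, j)) \<longleftrightarrow> is_corner n h i j"
  unfolding w_root_eq_w_max[OF assms(3)]
  using is_corner_if_bruhat_maximal[OF assms(2,3)] bruhat_maximal_if_is_corner[OF assms(2,3)] by blast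

end
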